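(* Let $\gamma$ be a $q$-curve with winding number $k$. Then: (a) if $q>1$, then $k\neq0$; (b) $q$ and $k$ are relatively prime; (c) if $\zeta$ is another $q$-curve (same $q$) whose point set does not intersect that of $\gamma$, then $\zeta$ has the same winding number $k$.
   Context: $\mathbb{T}^1=\mathbb{R}/\mathbb{Z}$, $\mathbb{T}^2=\mathbb{T}^1\times\mathbb{T}^1$. Let $q\in\mathbb{N}$. A $q$-curve is given by a continuous function $\hat\gamma:\mathbb{R}\to\mathbb{R}$ such that for some $k\in\mathbb{Z}$: $\hat\gamma(\hat\theta+q)-\hat\gamma(\hat\theta)=k$ for all $\hat\theta\in\mathbb{R}$, and $\hat\gamma(\hat\theta+l)-\hat\gamma(\hat\theta)\notin\mathbb{Z}$ for all $\hat\theta\in\mathbb{R}$ and all $1\le l<q$. The $q$-curve itself is the $q$-valued graph $\gamma=(\gamma_1,\dots,\gamma_q)$ on $\mathbb{T}^1$, $\gamma_i(\theta)=\hat\gamma(\hat\theta+i-1)\bmod1$ where $\hat\theta\in[0,1)$ represents $\theta$; equivalently its point set is $\Gamma=\{(\hat\theta\bmod1,\hat\gamma(\hat\theta)\bmod1):\hat\theta\in\mathbb{R}\}\subseteq\mathbb{T}^2$. Any such $\hat\gamma$ projecting onto $\Gamma$ is called a lift of $\gamma$, and the integer $k$ (independent of the lift) is the winding number of $\gamma$. *)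

theory Defs
  imports "HOL-Analysis.Analysis"
begin

text \<open>The torus T^1 = R/Z is represented by the fundamental domain [0,1), the
  projection R -> T^1 being frac.  Points of T^2 are pairs in [0,1) x [0,1).\<close>

definition q_curve_lift :: "nat \<Rightarrow> int \<Rightarrow> (real \<Rightarrow> real) \<Rightarrow> bool" where
  "q_curve_lift q k g \<longleftrightarrow>
     continuous_on UNIV g \<and>
     (\<forall>t. g (t + real q) - g t = of_int k) \<and>
     (\<forall>t. \<forall>l::nat. 1 \<le> l \<and> l < q \<longrightarrow> g (t + real l) - g t \<notin> \<int>)"

definition curve_points :: "(real \<Rightarrow> real) \<Rightarrow> (real \<times> real) set" where
  "curve_points g = {(frac t, frac (g t)) | t. True}"

end

theory Submission
  imports Defs
begin

text \<open>A continuous real function that never takes an integer value stays inside one open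
  unit interval \<open>(m, m + 1)\<close>, by the intermediate value theorem.  Applied to
  \<open>g (t + l) - g t\<close> for a proper divisor \<open>l = q / d\<close> of \<open>q\<close>, and summed over the \<open>d\<close> steps
  from \<open>0\<close> to \<open>q\<close>, this traps \<open>k\<close> strictly between \<open>d m\<close> and \<open>d (m + 1)\<close>, so \<open>d\<close> cannot
  divide \<open>k\<close>; hence \<open>gcd q k = 1\<close>, which also forces \<open>k \<noteq> 0\<close> when \<open>q > 1\<close>.  For two
  disjoint \<open>q\<close>-curves with lifts \<open>g\<close> and \<open>h\<close>, the difference \<open>h - g\<close> is never an integer,
  so it varies by less than \<open>1\<close>; but over a period it changes by \<open>k' - k\<close>.\<close>

lemma floor_eq_if_continuous_avoids_Ints:
  fixes F :: "real \<Rightarrow> real"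
  assumes cont: "continuous_on UNIV F" and avoid: "\<And>t. F t \<notin> \<int>"
  shows "\<lfloor>F s\<rfloor> = \<lfloor>F t\<rfloor>"
proof -
  have conn: "connected (range F)"
    using connected_continuous_image[OF cont connected_UNIV] .
  have no_jump: "\<not> \<lfloor>F a\<rfloor> < \<lfloor>F b\<rfloor>" for a b
  proof
    assume "\<lfloor>F a\<rfloor> < \<lfloor>F b\<rfloor>"
    then have "of_int \<lfloor>F b\<rfloor> \<in> {F a..F b}"
      by (simp add: floor_le_iff) linarith
    then have "of_int \<lfloor>F b\<rfloor> \<in> range F"
      using connected_contains_Icc[OF conn] by blast
    with avoid show False
      by (metis Ints_of_int imageE)
  qed
  show ?thesis
    using no_jump[of s t] no_jump[of t s] by linarith
qed

lemma continuous_avoids_Ints_in_unit_band: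
  fixes F :: "real \<Rightarrow> real"
  assumes cont: "continuous_on UNIV F" and avoid: "\<And>t. F t \<notin> \<int>"
  obtains m :: int where "\<And>t. of_int m < F t \<and> F t < of_int m + 1"
proof
  fix t
  have "\<lfloor>F t\<rfloor> = \<lfloor>F 0\<rfloor>"
    by (rule floor_eq_if_continuous_avoids_Ints[OF cont avoid])
  moreover have "F t \<noteq> of_int \<lfloor>F t\<rfloor>"
    using avoid[of t] by (metis Ints_of_int)
  ultimately show "of_int \<lfloor>F 0\<rfloor> < F t \<and> F t < of_int \<lfloor>F 0\<rfloor> + 1"
    using floor_correct[of "F t"] by linarith
qed

lemma q_curve_lift_not_dvd_winding:
  assumes lift: "q_curve_lift q k g" and q: "q = d * l" and d: "1 < d" and l: "1 \<le> l"
  shows "\<not> int d dvd k"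
proof
  assume "int d dvd k"
  then obtain c where k: "k = int d * c" by blast
  have cont: "continuous_on UNIV g" and period: "g (0 + real q) - g 0 = of_int k"
    using lift unfolding q_curve_lift_def by blast+
  have step_avoids: "\<And>t. g (t + real l) - g t \<notin> \<int>"
    using lift l d q unfolding q_curve_lift_def by simp
  define F where "F t = g (t + real l) - g t" for t
  have "continuous_on UNIV F"
    unfolding F_def by (intro continuous_intros continuous_on_compose2[OF cont]) auto
  then obtain m where band: "\<And>t. of_int m < F t \<and> F t < of_int m + 1"
    using continuous_avoids_Ints_in_unit_band step_avoids unfolding F_def by blast
  have "of_int k = g (real d * real l) - g 0"
    using period q by simp
  also have "\<dots> = (\<Sum>j<d. g (real (Suc j) * real l) - g (real j * real l))"
    using sum_lessThan_telescope[of "\<lambda>j. g (real j * real l)" d] by simp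
  also have "\<dots> = (\<Sum>j<d. F (real j * real l))"
    by (simp add: F_def algebra_simps)
  finally have k_sum: "of_int k = (\<Sum>j<d. F (real j * real l))" .
  have "{..<d} \<noteq> {}" using d by auto
  then have "(\<Sum>j<d. of_int m :: real) < of_int k" and "of_int k < (\<Sum>j<d. of_int m + 1 :: real)"
    unfolding k_sum by (auto intro!: sum_strict_mono simp del: sum_constant simp: band)
  then have "real d * of_int m < real d * of_int c" and "real d * of_int c < real d * (of_int m + 1)"
    by (simp_all add: k)
  then have "m < c" and "c < m + 1"
    using d by simp_all
  then show False by linarith
qed

lemma q_curve_lift_coprime:
  assumes q: "1 \<le> q" and lift: "q_curve_lift q k g"
  shows "coprime (int q) k"
proof (rule ccontr)
  assume "\<not> coprime (int q) k"
  define d where "d = nat (gcd (int q) k)"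
  have "gcd (int q) k \<noteq> 1"
    using \<open>\<not> coprime (int q) k\<close> by (simp add: coprime_iff_gcd_eq_1)
  moreover have "gcd (int q) k > 0" using q by simp
  ultimately have d_gt: "1 < d" unfolding d_def by linarith
  have "int d dvd int q" and d_dvd_k: "int d dvd k"
    unfolding d_def by simp_all
  then obtain l where ql: "q = d * l" by (metis dvd_def of_nat_dvd_iff)
  with q have "1 \<le> l" by (cases l) simp_all
  with q_curve_lift_not_dvd_winding[OF lift ql d_gt] d_dvd_k show False by blast
qed

lemma diff_notin_Ints_if_disjoint_curve_points:
  assumes "curve_points h \<inter> curve_points g = {}"
  shows "h t - g t \<notin> \<int>"
proof
  assume "h t - g t \<in> \<int>"
  then have "frac (h t) = frac (g t)"
    by (metis add_diff_cancel_left' diff_add_cancel frac_add_int_right)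
  then have "(frac t, frac (h t)) \<in> curve_points h \<inter> curve_points g"
    unfolding curve_points_def by auto
  with assms show False by blast
qed

lemma q_curve_lift_winding_eq_if_disjoint:
  assumes g: "q_curve_lift q k g" and h: "q_curve_lift q k' h"
    and disjoint: "curve_points h \<inter> curve_points g = {}"
  shows "k' = k"
proof -
  define D where "D t = h t - g t" for t
  have "continuous_on UNIV g" "continuous_on UNIV h"
    and "g (0 + real q) - g 0 = of_int k" "h (0 + real q) - h 0 = of_int k'"
    using g h unfolding q_curve_lift_def by blast+
  then have cont: "continuous_on UNIV D" and period: "D (real q) - D 0 = of_int (k' - k)"
    unfolding D_def by (auto intro: continuous_intros)
  have "\<lfloor>D (real q)\<rfloor> = \<lfloor>D 0\<rfloor>"
    using floor_eq_if_continuous_avoids_Ints[OF cont]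
      diff_notin_Ints_if_disjoint_curve_points[OF disjoint] unfolding D_def by blast
  then have "\<bar>D (real q) - D 0\<bar> < 1"
    using floor_correct[of "D (real q)"] floor_correct[of "D 0"] by linarith
  then show ?thesis
    unfolding period by linarith
qed

theorem mainTheorem2:
  fixes q :: nat and k :: int and g :: "real \<Rightarrow> real"
  assumes "q \<ge> 1"
    and "q_curve_lift q k g"
  shows "(q > 1 \<longrightarrow> k \<noteq> 0)
    \<and> coprime (int q) k
    \<and> (\<forall>h k'. q_curve_lift q k' h \<and> curve_points h \<inter> curve_points g = {} \<longrightarrow> k' = k)"
proof (intro conjI allI impI)
  show coprime: "coprime (int q) k"
    using q_curve_lift_coprime assms by blast
  show "k \<noteq> 0" if "q > 1"
    using coprime that by auto
  show "k' = k" if "q_curve_lift q k' h \<and> curve_points h \<inter> curve_points g = {}" for h k'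
    using q_curve_lift_winding_eq_if_disjoint assms(2) that by blast
qed

end
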